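(* In the setting described in the context, let $w\in\mathbb{Z}^{n-1}_{\ge0}$ and $z\in M$, and assume that $R_w$ contains two coprime monomials. Then $\dim_{\mathbb{K}}R_{w+z}=\dim_{\mathbb{K}}R_w+\dim_{\mathbb{K}}R_z-1$.
   Context: Let $\mathbb{K}$ be a field. A Newton polyhedron is the convex hull of $S+\mathbb{R}^n_{\ge0}$ for a nonempty finite $S\subset\mathbb{Z}^n_{\ge0}$; for $\xi\in\mathbb{R}^n_{\ge0}$ the face $\Delta^\xi=\{a\in\Delta:\langle\xi,a\rangle=\min_{b\in\Delta}\langle\xi,b\rangle\}$ is compact iff $\xi\in\mathbb{R}^n_{>0}$; a loose edge is a compact 1-dimensional face not contained in any compact face of dimension $\ge2$. Let $\Delta$ be a Newton polyhedron with a loose edge $E$, let $c\in\mathbb{Z}^n$ be a primitive lattice vector parallel to $E$, and let $\xi_1,\dots,\xi_{n-1}\in\mathbb{Z}^n_{\ge0}$ be linearly independent vectors with $\langle\xi_i,c\rangle=0$. For $\alpha\in\mathbb{Z}^n$ put $\omega(\underline x^\alpha)=(\langle\xi_1,\alpha\rangle,\dots,\langle\xi_{n-1},\alpha\rangle)$ (the weight). For $w\in\mathbb{Z}^{n-1}_{\ge0}$ let $R_w\subset\mathbb{K}[x_1,\dots,x_n]$ be the $\mathbb{K}$-span of the monomials $\underline x^\alpha$, $\alpha\in\mathbb{Z}^n_{\ge0}$, with $\omega(\underline x^\alpha)=w$ (so $\mathbb{K}[x_1,\dots,x_n]=\bigoplus_w R_w$ is graded and each $R_w$ is finite-dimensional).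 Let $M$ be the set of $z\in\mathbb{Z}^{n-1}_{\ge0}$ for which there is $\alpha\in\mathbb{Z}^n$ with $\omega(\underline x^\alpha)=z$ and $\langle\xi,\alpha\rangle\ge0$ for all $\xi\in\mathbb{R}^n_{\ge0}$ orthogonal to $E$ (i.e. to $c$). *)

theory Defs
  imports "HOL-Analysis.Analysis"
begin

text \<open>Points of R^n / Z^n are vectors indexed by a finite type 'n (n = CARD('n)).
  Monomials x^alpha of K[x_1..x_n] are identified with their exponent vectors alpha :: nat^'n.\<close>

definition rvec :: "int^'n \<Rightarrow> real^'n" where
  "rvec v = (\<chi> j. real_of_int (v $ j))"

definition nvec :: "nat^'n \<Rightarrow> real^'n" where
  "nvec v = (\<chi> j. real (v $ j))"

definition nonneg_vec :: "real^'n \<Rightarrow> bool" where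
  "nonneg_vec x \<longleftrightarrow> (\<forall>j. 0 \<le> x $ j)"

definition newton_polyhedron :: "(nat^'n) set \<Rightarrow> (real^'n) set" where
  "newton_polyhedron S = convex hull {nvec s + r | s r. s \<in> S \<and> nonneg_vec r}"

definition is_newton_polyhedron :: "(real^'n) set \<Rightarrow> bool" where
  "is_newton_polyhedron D \<longleftrightarrow> (\<exists>S. finite S \<and> S \<noteq> {} \<and> D = newton_polyhedron S)"

definition face_of_dir :: "(real^'n) set \<Rightarrow> real^'n \<Rightarrow> (real^'n) set" where
  "face_of_dir D \<xi> = {a \<in> D. \<xi> \<bullet> a = (INF b\<in>D. \<xi> \<bullet> b)}"

definition compact_face :: "(real^'n) set \<Rightarrow> (real^'n) set \<Rightarrow> bool" where
  "compact_face D F \<longleftrightarrow> (\<exists>\<xi>. nonneg_vec \<xi> \<and> F = face_of_dir D \<xi>) \<and> compact F"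

definition loose_edge :: "(real^'n) set \<Rightarrow> (real^'n) set \<Rightarrow> bool" where
  "loose_edge D E \<longleftrightarrow> compact_face D E \<and> aff_dim E = 1 \<and>
     \<not> (\<exists>F. compact_face D F \<and> aff_dim F \<ge> 2 \<and> E \<subseteq> F)"

definition primitive_lattice_vec :: "int^'n \<Rightarrow> bool" where
  "primitive_lattice_vec c \<longleftrightarrow> c \<noteq> 0 \<and> (\<forall>k::int. (\<forall>j. k dvd c $ j) \<longrightarrow> \<bar>k\<bar> = 1)"

definition parallel_to :: "int^'n \<Rightarrow> (real^'n) set \<Rightarrow> bool" where
  "parallel_to c E \<longleftrightarrow> (\<forall>a\<in>E. \<forall>b\<in>E. \<exists>t::real. b - a = t *\<^sub>R rvec c)"

definition weight :: "(nat \<Rightarrow> int^'n) \<Rightarrow> int^'n \<Rightarrow> nat \<Rightarrow> int" where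
  "weight \<xi> \<alpha> i = (\<Sum>j\<in>UNIV. \<xi> i $ j * \<alpha> $ j)"

definition ivec :: "nat^'n \<Rightarrow> int^'n" where
  "ivec v = (\<chi> j. int (v $ j))"

text \<open>Exponent vectors of the monomials spanning R_w (w indexed by i < n-1).\<close>
definition graded_monomials :: "(nat \<Rightarrow> int^'n) \<Rightarrow> (nat \<Rightarrow> nat) \<Rightarrow> (nat^'n) set" where
  "graded_monomials \<xi> w = {\<alpha>. \<forall>i < CARD('n) - 1. weight \<xi> (ivec \<alpha>) i = int (w i)}"

text \<open>dim_K R_w = number of monomials of weight w (they form a K-basis of R_w).\<close>
definition dimR :: "(nat \<Rightarrow> int^'n) \<Rightarrow> (nat \<Rightarrow> nat) \<Rightarrow> nat" where
  "dimR \<xi> w = card (graded_monomials \<xi> w)"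

text \<open>Monomials x^a, x^b are coprime iff gcd(x^a,x^b) = x^min(a,b) = 1.\<close>
definition coprime_monomials :: "nat^'n \<Rightarrow> nat^'n \<Rightarrow> bool" where
  "coprime_monomials a b \<longleftrightarrow> (\<forall>j. min (a $ j) (b $ j) = 0)"

definition setM :: "(nat \<Rightarrow> int^'n) \<Rightarrow> int^'n \<Rightarrow> (nat \<Rightarrow> nat) set" where
  "setM \<xi> c = {z. \<exists>\<alpha>::int^'n. (\<forall>i < CARD('n) - 1. weight \<xi> \<alpha> i = int (z i)) \<and>
       (\<forall>\<eta>::real^'n. nonneg_vec \<eta> \<longrightarrow> \<eta> \<bullet> rvec c = 0 \<longrightarrow> 0 \<le> \<eta> \<bullet> rvec \<alpha>)}"

end

theory Submission
  imports Defs
begin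

text \<open>Because the \<open>\<xi>\<^sub>i\<close> are \<open>n - 1\<close> independent vectors orthogonal to the primitive vector \<open>c\<close>,
  two exponent vectors have the same weight iff they differ by an integer multiple of \<open>c\<close>.
  Hence, for any \<open>\<alpha>\<close> of weight \<open>z\<close>, the monomials of weight \<open>z\<close> are the lattice points
  \<open>\<alpha> + k c \<ge> 0\<close>, and \<open>dim R\<^sub>z\<close> counts the integers \<open>k\<close> of an interval whose lower end is imposed by
  the positive and whose upper end by the negative coordinates of \<open>c\<close>; both kinds occur, since
  a compact edge of a Newton polyhedron cannot point into the orthant.
  Two coprime monomials of weight \<open>w\<close> must have exponents \<open>m c\<^sup>-\<close> and \<open>m c\<^sup>+\<close>, so \<open>dim R\<^sub>w = m + 1\<close>.
  Adding \<open>m c\<^sup>-\<close> to \<open>\<alpha>\<close> raises only the upper end of the interval, by exactly \<open>m\<close>; the condition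
  \<open>z \<in> M\<close> ensures that the lower end exceeds the upper end by at most one, so none of this gain
  is lost.\<close>

subsection \<open>Exponent vectors and weights\<close>

lemma int_le_div_iff_mult_le:
  fixes k g d :: int
  assumes "0 < d"
  shows "k \<le> g div d \<longleftrightarrow> k * d \<le> g"
proof
  assume "k \<le> g div d"
  then have "k * d \<le> g div d * d" using assms by simp
  also have "\<dots> = g - g mod d" by (simp add: minus_mod_eq_div_mult)
  also have "\<dots> \<le> g" using assms by simp
  finally show "k * d \<le> g" .
next
  assume "k * d \<le> g"
  then have "(k * d) div d \<le> g div d" using assms by (rule zdiv_mono1)
  then show "k \<le> g div d" using assms by simp
qed

lemma zero_le_add_mult_pos_iff:
  fixes g k d :: int
  assumes "0 < d"
  shows "0 \<le> g + k * d \<longleftrightarrow> - (g div d) \<le> k"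
  using int_le_div_iff_mult_le[OF assms, of "- k" g] by linarith

lemma zero_le_add_mult_neg_iff:
  fixes g k d :: int
  assumes "d < 0"
  shows "0 \<le> g + k * d \<longleftrightarrow> k \<le> g div - d"
  using int_le_div_iff_mult_le[of "- d" k g] assms by linarith

lemma inner_rvec: "rvec x \<bullet> rvec y = of_int (\<Sum>j\<in>UNIV. x$j * y$j)"
  unfolding rvec_def inner_vec_def by simp

lemma rvec_diff: "rvec (u - v) = rvec u - rvec v"
  unfolding rvec_def by (simp add: vec_eq_iff)

lemma rvec_zero [simp]: "rvec 0 = 0"
  unfolding rvec_def by (simp add: vec_eq_iff)

lemma rvec_eq_0_iff: "rvec v = 0 \<longleftrightarrow> v = 0"
  unfolding rvec_def by (simp add: vec_eq_iff)

lemma nonneg_ivec: "0 \<le> ivec a"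
  unfolding ivec_def less_eq_vec_def by simp

lemma inj_ivec: "inj ivec"
  unfolding ivec_def by (rule injI) (simp add: vec_eq_iff)

lemma nonneg_in_range_ivec: "0 \<le> \<gamma> \<Longrightarrow> \<gamma> \<in> range ivec"
  unfolding ivec_def less_eq_vec_def
  by (intro range_eqI[of _ _ "\<chi> j. nat (\<gamma>$j)"]) (simp add: vec_eq_iff)

lemma weight_add: "weight \<xi> (u + v) i = weight \<xi> u i + weight \<xi> v i"
  unfolding weight_def by (simp add: algebra_simps sum.distrib)

lemma weight_smult: "weight \<xi> (k *s v) i = k * weight \<xi> v i"
  unfolding weight_def by (simp add: algebra_simps sum_distrib_left)

definition has_weight :: "(nat \<Rightarrow> int^'n) \<Rightarrow> int^'n \<Rightarrow> (nat \<Rightarrow> nat) \<Rightarrow> bool" where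
  "has_weight \<xi> \<gamma> w \<longleftrightarrow> (\<forall>i < CARD('n) - 1. weight \<xi> \<gamma> i = int (w i))"

lemma graded_monomials_iff: "a \<in> graded_monomials \<xi> w \<longleftrightarrow> has_weight \<xi> (ivec a) w"
  unfolding graded_monomials_def has_weight_def by simp

lemma ivec_image_graded_monomials:
  "ivec ` graded_monomials \<xi> w = {\<gamma>. 0 \<le> \<gamma> \<and> has_weight \<xi> \<gamma> w}"
proof (intro set_eqI iffI)
  fix \<gamma> assume "\<gamma> \<in> ivec ` graded_monomials \<xi> w"
  then show "\<gamma> \<in> {\<gamma>. 0 \<le> \<gamma> \<and> has_weight \<xi> \<gamma> w}"
    using nonneg_ivec by (auto simp: graded_monomials_iff)
next
  fix \<gamma> assume "\<gamma> \<in> {\<gamma>. 0 \<le> \<gamma> \<and> has_weight \<xi> \<gamma> w}"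
  moreover from this obtain a where "\<gamma> = ivec a" using nonneg_in_range_ivec by blast
  ultimately show "\<gamma> \<in> ivec ` graded_monomials \<xi> w" by (simp add: graded_monomials_iff)
qed

lemma has_weight_add:
  "has_weight \<xi> u w \<Longrightarrow> has_weight \<xi> v z \<Longrightarrow> has_weight \<xi> (u + v) (\<lambda>i. w i + z i)"
  unfolding has_weight_def by (simp add: weight_add)

lemma has_weight_zero: "has_weight \<xi> 0 (\<lambda>_. 0)"
  unfolding has_weight_def weight_def by simp

subsection \<open>Lattice points of a line in the orthant\<close>

definition mixed_signs :: "int^'n \<Rightarrow> bool" where
  "mixed_signs c \<longleftrightarrow> (\<exists>i. 0 < c$i) \<and> (\<exists>j. c$j < 0)"

definition neg_part :: "int^'n \<Rightarrow> int^'n" where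
  "neg_part c = (\<chi> j. max 0 (- c$j))"

definition line_params :: "int^'n \<Rightarrow> int^'n \<Rightarrow> int set" where
  "line_params c \<gamma> = {k. 0 \<le> \<gamma> + k *s c}"

definition line_lower :: "int^'n \<Rightarrow> int^'n \<Rightarrow> int" where
  "line_lower c \<gamma> = Max ((\<lambda>i. - (\<gamma>$i div c$i)) ` {i. 0 < c$i})"

definition line_upper :: "int^'n \<Rightarrow> int^'n \<Rightarrow> int" where
  "line_upper c \<gamma> = Min ((\<lambda>j. \<gamma>$j div - c$j) ` {j. c$j < 0})"

text \<open>The extreme rays of the cone \<open>{\<eta> \<ge> 0. \<eta> \<bullet> c = 0}\<close> are the unit vectors \<open>e\<^sub>j\<close> with \<open>c\<^sub>j = 0\<close> and
  the vectors \<open>-c\<^sub>j e\<^sub>i + c\<^sub>i e\<^sub>j\<close> with \<open>c\<^sub>i > 0 > c\<^sub>j\<close>.\<close>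
definition nonneg_on_orthogonal_cone :: "int^'n \<Rightarrow> int^'n \<Rightarrow> bool" where
  "nonneg_on_orthogonal_cone c \<gamma> \<longleftrightarrow>
     (\<forall>\<eta>. nonneg_vec \<eta> \<longrightarrow> \<eta> \<bullet> rvec c = 0 \<longrightarrow> 0 \<le> \<eta> \<bullet> rvec \<gamma>)"

lemma nonneg_on_orthogonal_cone_zero_coord:
  fixes c \<gamma> :: "int^'n"
  assumes "nonneg_on_orthogonal_cone c \<gamma>" "c$j = 0"
  shows "0 \<le> \<gamma>$j"
proof -
  have "nonneg_vec (axis j 1)" by (simp add: nonneg_vec_def axis_def)
  moreover have "axis j 1 \<bullet> rvec c = 0" using assms(2) by (simp add: inner_axis' rvec_def)
  ultimately have "0 \<le> axis j 1 \<bullet> rvec \<gamma>"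
    using assms(1) unfolding nonneg_on_orthogonal_cone_def by blast
  then show ?thesis by (simp add: inner_axis' rvec_def)
qed

lemma nonneg_on_orthogonal_cone_opposite_coords:
  fixes c \<gamma> :: "int^'n"
  assumes "nonneg_on_orthogonal_cone c \<gamma>" "0 < c$i" "c$j < 0"
  shows "0 \<le> - c$j * \<gamma>$i + c$i * \<gamma>$j"
proof -
  define \<eta> :: "real^'n" where "\<eta> = axis i (of_int (- c$j)) + axis j (of_int (c$i))"
  have "nonneg_vec \<eta>" "\<eta> \<bullet> rvec c = 0"
    using assms(2,3) unfolding \<eta>_def
    by (simp add: nonneg_vec_def axis_def, simp add: inner_add_left inner_axis' rvec_def)
  then have "0 \<le> \<eta> \<bullet> rvec \<gamma>"
    using assms(1) unfolding nonneg_on_orthogonal_cone_def by blast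
  moreover have "\<eta> \<bullet> rvec \<gamma> = of_int (- c$j * \<gamma>$i + c$i * \<gamma>$j)"
    by (simp add: \<eta>_def inner_add_left inner_axis' rvec_def)
  ultimately show ?thesis by linarith
qed

lemma nonneg_on_orthogonal_cone_zero: "nonneg_on_orthogonal_cone c 0"
  unfolding nonneg_on_orthogonal_cone_def by simp

lemma line_params_zero:
  assumes "mixed_signs c"
  shows "line_params c 0 = {0}"
proof -
  obtain i j where "0 < c$i" "c$j < 0" using assms unfolding mixed_signs_def by blast
  then have "k = 0" if "0 \<le> k * c$i" "0 \<le> k * c$j" for k
    using that by (simp add: zero_le_mult_iff)
  then show ?thesis unfolding line_params_def less_eq_vec_def by auto
qed

lemma line_lower_le_iff:
  assumes "mixed_signs c"
  shows "line_lower c \<gamma> \<le> k \<longleftrightarrow> (\<forall>i. 0 < c$i \<longrightarrow> - (\<gamma>$i div c$i) \<le> k)"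
  using assms unfolding line_lower_def mixed_signs_def by (subst Max_le_iff) auto

lemma le_line_upper_iff:
  assumes "mixed_signs c"
  shows "k \<le> line_upper c \<gamma> \<longleftrightarrow> (\<forall>j. c$j < 0 \<longrightarrow> k \<le> \<gamma>$j div - c$j)"
  using assms unfolding line_upper_def mixed_signs_def by (subst Min_ge_iff) auto

lemma line_params_eq_atLeastAtMost:
  assumes "mixed_signs c" and zero: "\<And>j. c$j = 0 \<Longrightarrow> 0 \<le> \<gamma>$j"
  shows "line_params c \<gamma> = {line_lower c \<gamma> .. line_upper c \<gamma>}"
proof -
  have coord: "0 \<le> \<gamma>$j + k * c$j \<longleftrightarrow>
      (0 < c$j \<longrightarrow> - (\<gamma>$j div c$j) \<le> k) \<and> (c$j < 0 \<longrightarrow> k \<le> \<gamma>$j div - c$j)" for j k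
    using zero[of j] zero_le_add_mult_pos_iff zero_le_add_mult_neg_iff
    by (cases "c$j" "0::int" rule: linorder_cases) auto
  show ?thesis
    unfolding line_params_def less_eq_vec_def
    by (auto simp: coord line_lower_le_iff[OF assms(1)] le_line_upper_iff[OF assms(1)])
qed

lemma line_lower_add_neg_part: "line_lower c (\<gamma> + m *s neg_part c) = line_lower c \<gamma>"
  unfolding line_lower_def neg_part_def by (intro arg_cong[where f = Max] image_cong) auto

lemma line_upper_add_neg_part:
  assumes "mixed_signs c"
  shows "line_upper c (\<gamma> + m *s neg_part c) = line_upper c \<gamma> + m"
proof -
  have "(\<gamma> + m *s neg_part c)$j div - c$j = \<gamma>$j div - c$j + m" if "c$j < 0" for j
    using that div_mult_self1[of "- c$j" "\<gamma>$j" m] by (simp add: neg_part_def)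
  then have "line_upper c (\<gamma> + m *s neg_part c) = Min ((\<lambda>j. \<gamma>$j div - c$j + m) ` {j. c$j < 0})"
    unfolding line_upper_def by (intro arg_cong[where f = Min] image_cong) auto
  also have "\<dots> = line_upper c \<gamma> + m"
    using assms unfolding line_upper_def mixed_signs_def by (intro Min_add_commute) auto
  finally show ?thesis .
qed

lemma line_lower_le_upper:
  assumes "mixed_signs c" "nonneg_on_orthogonal_cone c \<gamma>"
  shows "line_lower c \<gamma> \<le> line_upper c \<gamma> + 1"
proof -
  have "- (\<gamma>$i div c$i) - 1 \<le> \<gamma>$j div - c$j" if ci: "0 < c$i" and cj: "c$j < 0" for i j
  proof -
    define p where "p = \<gamma>$i div c$i"
    define q where "q = \<gamma>$j div - c$j"
    have "\<gamma>$i < (p + 1) * c$i" "\<gamma>$j < (q + 1) * - c$j"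
      using int_le_div_iff_mult_le[of "c$i" "p + 1" "\<gamma>$i"] int_le_div_iff_mult_le[of "- c$j" "q + 1" "\<gamma>$j"]
        ci cj unfolding p_def q_def by auto
    then have "- c$j * \<gamma>$i < - c$j * ((p + 1) * c$i)" "c$i * \<gamma>$j < c$i * ((q + 1) * - c$j)"
      using ci cj by (auto intro: mult_strict_left_mono simp del: mult_minus_left mult_minus_right)
    then have "- c$j * \<gamma>$i + c$i * \<gamma>$j < c$i * - c$j * (p + q + 2)"
      by (simp add: algebra_simps)
    moreover have "0 \<le> - c$j * \<gamma>$i + c$i * \<gamma>$j"
      using nonneg_on_orthogonal_cone_opposite_coords[OF assms(2) ci cj] .
    ultimately have "0 < c$i * - c$j * (p + q + 2)" by linarith
    moreover have "0 < c$i * - c$j" using ci cj by (simp add: mult_pos_neg)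
    ultimately have "0 < p + q + 2" by (rule zero_less_mult_pos)
    then show ?thesis unfolding p_def q_def by simp
  qed
  then have "- (\<gamma>$i div c$i) - 1 \<le> line_upper c \<gamma>" if "0 < c$i" for i
    using that by (simp add: le_line_upper_iff[OF assms(1)])
  then show ?thesis by (simp add: line_lower_le_iff[OF assms(1)] algebra_simps)
qed

lemma card_line_params_add_neg_part:
  assumes "mixed_signs c" "nonneg_on_orthogonal_cone c \<gamma>" "0 \<le> m"
  shows "card (line_params c (\<gamma> + m *s neg_part c)) = card (line_params c \<gamma>) + nat m"
proof -
  have zero: "0 \<le> \<gamma>$j" "0 \<le> (\<gamma> + m *s neg_part c)$j" if "c$j = 0" for j
    using nonneg_on_orthogonal_cone_zero_coord[OF assms(2) that] that by (auto simp: neg_part_def)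
  have "line_params c \<gamma> = {line_lower c \<gamma> .. line_upper c \<gamma>}"
    using line_params_eq_atLeastAtMost[OF assms(1) zero(1)] .
  moreover have "line_params c (\<gamma> + m *s neg_part c) = {line_lower c \<gamma> .. line_upper c \<gamma> + m}"
    using line_params_eq_atLeastAtMost[OF assms(1) zero(2)]
    by (simp add: line_lower_add_neg_part line_upper_add_neg_part[OF assms(1)])
  ultimately show ?thesis
    using line_lower_le_upper[OF assms(1,2)] assms(3) by simp
qed

subsection \<open>Directions of compact faces\<close>

lemma newton_polyhedron_add_nonneg:
  assumes "is_newton_polyhedron D" "x \<in> D" "nonneg_vec r"
  shows "x + r \<in> D"
proof -
  obtain S where "D = newton_polyhedron S"
    using assms(1) unfolding is_newton_polyhedron_def by blast
  then obtain P where D: "D = convex hull P" and P: "P = {nvec s + r | s r. s \<in> S \<and> nonneg_vec r}"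
    unfolding newton_polyhedron_def by blast
  have "(+) r ` P \<subseteq> P"
  proof
    fix y assume "y \<in> (+) r ` P"
    then obtain s r' where "y = nvec s + (r' + r)" "s \<in> S" "nonneg_vec r'"
      unfolding P by (auto simp: algebra_simps)
    moreover have "nonneg_vec (r' + r)"
      using \<open>nonneg_vec r'\<close> assms(3) unfolding nonneg_vec_def by simp
    ultimately show "y \<in> P" unfolding P by blast
  qed
  have "x + r \<in> (+) r ` (convex hull P)" using assms(2) D by (auto simp: add.commute)
  also have "\<dots> = convex hull ((+) r ` P)" by (simp add: convex_hull_translation)
  also have "\<dots> \<subseteq> convex hull P" using \<open>(+) r ` P \<subseteq> P\<close> by (rule hull_mono)
  finally show ?thesis using D by simp
qed

lemma compact_face_no_nonneg_direction:
  assumes D: "is_newton_polyhedron D" and F: "compact (face_of_dir D \<eta>)"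
    and x: "x \<in> face_of_dir D \<eta>" and v: "nonneg_vec v" "\<eta> \<bullet> v = 0"
  shows "v = 0"
proof (rule ccontr)
  assume "v \<noteq> 0"
  have ray: "x + s *\<^sub>R v \<in> face_of_dir D \<eta>" if "0 \<le> s" for s
  proof -
    have "nonneg_vec (s *\<^sub>R v)" using v(1) that unfolding nonneg_vec_def by simp
    then show ?thesis
      using x newton_polyhedron_add_nonneg[OF D] v(2) by (auto simp: face_of_dir_def inner_add_right)
  qed
  obtain B where B: "\<forall>y\<in>face_of_dir D \<eta>. norm y \<le> B"
    using compact_imp_bounded[OF F] unfolding bounded_iff by blast
  define s where "s = (B + norm x + 1) / norm v"
  have "0 \<le> B" using B x by (meson norm_ge_zero order_trans)
  then have "0 \<le> s" and "norm (s *\<^sub>R v) = B + norm x + 1"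
    using \<open>v \<noteq> 0\<close> by (simp_all add: s_def)
  moreover have "norm (s *\<^sub>R v) \<le> norm (x + s *\<^sub>R v) + norm x"
    by (metis add_diff_cancel_left' norm_triangle_ineq4 add.commute)
  ultimately show False using B ray by fastforce
qed

lemma compact_face_direction_mixed_signs:
  assumes D: "is_newton_polyhedron D" and E: "compact_face D E" and par: "parallel_to c E"
    and ab: "a \<in> E" "b \<in> E" "a \<noteq> b"
  shows "mixed_signs c"
proof (rule ccontr)
  assume not_mixed: "\<not> mixed_signs c"
  obtain \<eta> where E_eq: "E = face_of_dir D \<eta>" and "compact E"
    using E unfolding compact_face_def by blast
  obtain t where t: "b - a = t *\<^sub>R rvec c" using par ab unfolding parallel_to_def by blast
  with ab(3) have "t \<noteq> 0" "rvec c \<noteq> 0" by auto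
  have "\<eta> \<bullet> (b - a) = 0" using ab E_eq by (simp add: face_of_dir_def inner_diff_right)
  with t \<open>t \<noteq> 0\<close> have orth: "\<eta> \<bullet> rvec c = 0" by simp
  from not_mixed have "nonneg_vec (rvec c) \<or> nonneg_vec (- rvec c)"
    unfolding mixed_signs_def nonneg_vec_def rvec_def by (auto simp: not_less)
  then show False
    using compact_face_no_nonneg_direction[OF D _ ab(1)[unfolded E_eq]] \<open>compact E\<close> E_eq orth \<open>rvec c \<noteq> 0\<close>
    by (metis inner_minus_right neg_0_equal_iff_equal neg_equal_0_iff_equal)
qed

subsection \<open>The kernel of the weight map\<close>

lemma orthogonal_to_codim1_independent_imp_span:
  fixes x y :: "'a::euclidean_space"
  assumes B: "independent B" "card B = DIM('a) - 1"
    and orth: "\<forall>b\<in>B. b \<bullet> x = 0" "\<forall>b\<in>B. b \<bullet> y = 0" and "x \<noteq> 0"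
  shows "y \<in> span {x}"
proof (rule ccontr)
  assume y: "y \<notin> span {x}"
  define W where "W = {v. \<forall>b\<in>span B. orthogonal b v}"
  have "dim W + dim (span B) = DIM('a)"
    unfolding W_def using dim_subspace_orthogonal_to_vectors[of "span B" UNIV] by simp
  moreover have "dim (span B) = DIM('a) - 1"
    using B by (simp add: dim_span dim_eq_card_independent)
  ultimately have "dim W = 1" using DIM_positive[where 'a = 'a] by linarith
  have in_W: "v \<in> W" if "\<forall>b\<in>B. b \<bullet> v = 0" for v
    unfolding W_def using that orthogonal_to_span[of _ B v]
    by (auto simp: orthogonal_def inner_commute)
  have "independent {y, x}"
    using y \<open>x \<noteq> 0\<close> by (simp add: independent_insert)
  moreover have "y \<noteq> x" using y by (auto intro: span_base)
  ultimately have "card {y, x} \<le> dim W"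
    using in_W orth by (intro independent_card_le_dim) auto
  with \<open>dim W = 1\<close> \<open>y \<noteq> x\<close> show False by simp
qed

lemma primitive_lattice_vec_collinear:
  fixes c d :: "int^'n"
  assumes prim: "primitive_lattice_vec c" and d: "rvec d = t *\<^sub>R rvec c"
  shows "\<exists>k. d = k *s c"
proof -
  obtain j0 where j0: "c$j0 \<noteq> 0"
    using prim unfolding primitive_lattice_vec_def by (auto simp: vec_eq_iff)
  have "real_of_int (d$j * c$j0) = real_of_int (d$j0 * c$j)" for j
    using arg_cong[OF d, of "\<lambda>v. v$j"] arg_cong[OF d, of "\<lambda>v. v$j0"] by (simp add: rvec_def)
  then have cross: "d$j * c$j0 = d$j0 * c$j" for j
    by (simp only: of_int_eq_iff)
  obtain p q where pq: "d$j0 = p * gcd (d$j0) (c$j0)" "c$j0 = q * gcd (d$j0) (c$j0)" "coprime p q"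
    using gcd_coprime_exists[of "d$j0" "c$j0"] j0 by auto
  have reduced: "d$j * q = p * c$j" for j
    using cross[of j] j0 by (subst (asm) pq(1), subst (asm) pq(2)) (auto simp: algebra_simps)
  have "q dvd c$j" for j
    using reduced[of j] pq(3) by (metis coprime_commute coprime_dvd_mult_right_iff dvd_triv_right)
  then have "\<bar>q\<bar> = 1" using prim unfolding primitive_lattice_vec_def by blast
  then have "d$j = (p * q) * c$j" for j
    using reduced[of j] by (metis abs_mult_self_eq mult.assoc mult.commute mult_1_right)
  then show ?thesis by (auto simp: vec_eq_iff)
qed

lemma coprime_monomials_on_line:
  fixes a b :: "nat^'n" and c :: "int^'n"
  assumes cop: "coprime_monomials a b" and line: "ivec b = ivec a + m *s c" and "0 \<le> m"
  shows "ivec a = m *s neg_part c"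
proof -
  have "int (a$j) = m * max 0 (- c$j)" for j
  proof -
    have b: "int (b$j) = int (a$j) + m * c$j"
      using arg_cong[OF line, of "\<lambda>v. v$j"] by (simp add: ivec_def)
    have min: "min (a$j) (b$j) = 0" using cop unfolding coprime_monomials_def by blast
    consider "m * c$j = 0" | "0 < m * c$j" "0 < c$j" | "m * c$j < 0" "c$j < 0"
      using \<open>0 \<le> m\<close> mult_pos_pos[of m "c$j"] mult_pos_neg[of m "c$j"]
      by (cases "m = 0"; cases "c$j" "0::int" rule: linorder_cases) auto
    then show ?thesis
    proof cases
      case 1
      then show ?thesis using b min by auto
    next
      case 2
      then show ?thesis using b min by (simp add: min_def split: if_splits)
    next
      case 3
      then have "b$j = 0" using b min by (simp add: min_def split: if_splits)
      then show ?thesis using b 3 by simp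
    qed
  qed
  then show ?thesis by (simp add: vec_eq_iff ivec_def neg_part_def)
qed

locale weight_grading =
  fixes \<xi> :: "nat \<Rightarrow> int^'n" and c :: "int^'n"
  assumes primitive: "primitive_lattice_vec c"
    and weights_orthogonal: "\<forall>i < CARD('n) - 1. rvec (\<xi> i) \<bullet> rvec c = 0"
    and weights_inj: "inj_on (\<lambda>i. rvec (\<xi> i)) {..< CARD('n) - 1}"
    and weights_independent: "independent ((\<lambda>i. rvec (\<xi> i)) ` {..< CARD('n) - 1})"
begin

lemma weight_direction_eq_0: "i < CARD('n) - 1 \<Longrightarrow> weight \<xi> c i = 0"
  using weights_orthogonal unfolding inner_rvec weight_def by (simp only: of_int_eq_0_iff)

lemma weight_eq_iff: "(\<forall>i < CARD('n) - 1. weight \<xi> u i = weight \<xi> v i) \<longleftrightarrow> (\<exists>k. v = u + k *s c)"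
proof
  assume eq: "\<forall>i < CARD('n) - 1. weight \<xi> u i = weight \<xi> v i"
  have "c \<noteq> 0" using primitive unfolding primitive_lattice_vec_def by simp
  have "rvec (v - u) \<in> span {rvec c}"
  proof (rule orthogonal_to_codim1_independent_imp_span[OF weights_independent])
    show "card ((\<lambda>i. rvec (\<xi> i)) ` {..< CARD('n) - 1}) = DIM(real^'n) - 1"
      using weights_inj by (simp add: card_image)
    show "\<forall>b\<in>(\<lambda>i. rvec (\<xi> i)) ` {..< CARD('n) - 1}. b \<bullet> rvec c = 0"
      using weights_orthogonal by auto
    show "\<forall>b\<in>(\<lambda>i. rvec (\<xi> i)) ` {..< CARD('n) - 1}. b \<bullet> rvec (v - u) = 0"
      using eq by (auto simp: rvec_diff inner_diff_right inner_rvec weight_def)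
    show "rvec c \<noteq> 0" using \<open>c \<noteq> 0\<close> by (simp add: rvec_eq_0_iff)
  qed
  then obtain t where "rvec (v - u) = t *\<^sub>R rvec c" by (auto simp: span_singleton)
  then obtain k where "v - u = k *s c" using primitive_lattice_vec_collinear[OF primitive] by blast
  then show "\<exists>k. v = u + k *s c" by (metis add.commute diff_add_cancel)
qed (auto simp: weight_add weight_smult weight_direction_eq_0)

lemma has_weight_iff_on_line:
  assumes "has_weight \<xi> \<alpha> w"
  shows "has_weight \<xi> \<gamma> w \<longleftrightarrow> (\<exists>k. \<gamma> = \<alpha> + k *s c)"
proof -
  have "has_weight \<xi> \<gamma> w \<longleftrightarrow> (\<forall>i < CARD('n) - 1. weight \<xi> \<alpha> i = weight \<xi> \<gamma> i)"
    using assms unfolding has_weight_def by (simp add: eq_commute)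
  then show ?thesis by (simp only: weight_eq_iff)
qed

lemma inj_line_param: "inj (\<lambda>k. \<alpha> + k *s c)"
proof (rule injI)
  obtain j where "c$j \<noteq> 0"
    using primitive unfolding primitive_lattice_vec_def by (auto simp: vec_eq_iff)
  then show "k = l" if "\<alpha> + k *s c = \<alpha> + l *s c" for k l
    using arg_cong[OF that, of "\<lambda>v. v$j"] by simp
qed

lemma card_graded_monomials:
  assumes "has_weight \<xi> \<alpha> w"
  shows "dimR \<xi> w = card (line_params c \<alpha>)"
proof -
  have "ivec ` graded_monomials \<xi> w = (\<lambda>k. \<alpha> + k *s c) ` line_params c \<alpha>"
    unfolding ivec_image_graded_monomials has_weight_iff_on_line[OF assms] line_params_def by auto
  then have "card (graded_monomials \<xi> w) = card ((\<lambda>k. \<alpha> + k *s c) ` line_params c \<alpha>)"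
    using card_image[OF inj_on_subset[OF inj_ivec subset_UNIV]] by metis
  also have "\<dots> = card (line_params c \<alpha>)"
    using card_image[OF inj_on_subset[OF inj_line_param subset_UNIV]] .
  finally show ?thesis unfolding dimR_def .
qed

lemma dimR_zero:
  assumes "mixed_signs c"
  shows "dimR \<xi> (\<lambda>_. 0) = 1"
  using card_graded_monomials[OF has_weight_zero] line_params_zero[OF assms] by simp

lemma dimR_add_neg_part:
  assumes "mixed_signs c" "0 \<le> m" "has_weight \<xi> (m *s neg_part c) w"
    and "has_weight \<xi> \<alpha> z" "nonneg_on_orthogonal_cone c \<alpha>"
  shows "dimR \<xi> (\<lambda>i. w i + z i) = dimR \<xi> z + nat m"
proof -
  have "has_weight \<xi> (\<alpha> + m *s neg_part c) (\<lambda>i. w i + z i)"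
    using has_weight_add[OF assms(4,3)] by (simp add: add.commute)
  then have "dimR \<xi> (\<lambda>i. w i + z i) = card (line_params c (\<alpha> + m *s neg_part c))"
    by (rule card_graded_monomials)
  also have "\<dots> = card (line_params c \<alpha>) + nat m"
    using card_line_params_add_neg_part assms(1,5,2) .
  also have "card (line_params c \<alpha>) = dimR \<xi> z"
    using card_graded_monomials[OF assms(4)] by simp
  finally show ?thesis .
qed

lemma coprime_graded_monomials_neg_part:
  assumes a: "a \<in> graded_monomials \<xi> w" and b: "b \<in> graded_monomials \<xi> w"
    and cop: "coprime_monomials a b"
  obtains m where "0 \<le> m" "has_weight \<xi> (m *s neg_part c) w"
proof -
  obtain k where k: "ivec b = ivec a + k *s c"
    using a b has_weight_iff_on_line unfolding graded_monomials_iff by blast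
  show ?thesis
  proof (cases "0 \<le> k")
    case True
    then show ?thesis
      using that coprime_monomials_on_line[OF cop k] a by (metis graded_monomials_iff)
  next
    case False
    have "coprime_monomials b a"
      using cop unfolding coprime_monomials_def by (simp add: min.commute)
    moreover have "ivec a = ivec b + (- k) *s c"
      using k by (simp add: vec_eq_iff)
    ultimately have "ivec b = (- k) *s neg_part c"
      using False by (intro coprime_monomials_on_line) auto
    then show ?thesis
      using that[of "- k"] b False by (simp add: graded_monomials_iff)
  qed
qed

end

theorem lemma2p4:
  fixes D E :: "(real^'n) set" and c :: "int^'n" and \<xi> :: "nat \<Rightarrow> int^'n"
    and w z :: "nat \<Rightarrow> nat"
  assumes "is_newton_polyhedron D"
    and "loose_edge D E"
    and "primitive_lattice_vec c" and "parallel_to c E"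
    and "\<forall>i < CARD('n) - 1. \<forall>j. 0 \<le> \<xi> i $ j"
    and "\<forall>i < CARD('n) - 1. rvec (\<xi> i) \<bullet> rvec c = 0"
    and "inj_on (\<lambda>i. rvec (\<xi> i)) {..< CARD('n) - 1}"
    and "independent ((\<lambda>i. rvec (\<xi> i)) ` {..< CARD('n) - 1})"
    and "z \<in> setM \<xi> c"
    and "\<exists>a \<in> graded_monomials \<xi> w. \<exists>b \<in> graded_monomials \<xi> w. coprime_monomials a b"
  shows "dimR \<xi> (\<lambda>i. w i + z i) = dimR \<xi> w + dimR \<xi> z - 1"
proof -
  interpret weight_grading \<xi> c using assms(3,6-8) by unfold_locales
  have "E \<noteq> {}" "\<And>a. E \<noteq> {a}" using assms(2) unfolding loose_edge_def by auto
  then obtain a b where "a \<in> E" "b \<in> E" "a \<noteq> b" by blast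
  then have mixed: "mixed_signs c"
    using compact_face_direction_mixed_signs assms(1,2,4) unfolding loose_edge_def by blast
  obtain m where m: "0 \<le> m" "has_weight \<xi> (m *s neg_part c) w"
    using coprime_graded_monomials_neg_part assms(10) by blast
  obtain \<alpha> where \<alpha>: "has_weight \<xi> \<alpha> z" "nonneg_on_orthogonal_cone c \<alpha>"
    using assms(9) unfolding setM_def has_weight_def nonneg_on_orthogonal_cone_def by blast
  have "dimR \<xi> (\<lambda>i. w i + z i) = dimR \<xi> z + nat m"
    by (rule dimR_add_neg_part[OF mixed m \<alpha>])
  moreover have "dimR \<xi> w = 1 + nat m"
    using dimR_add_neg_part[OF mixed m has_weight_zero nonneg_on_orthogonal_cone_zero] dimR_zero[OF mixed]
    by simp
  ultimately show ?thesis by simp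
qed

end
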